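(* Let $\mathcal{G}\rightrightarrows M$ be a diffeological groupoid. Then the quotient groupoid $\mathcal{G}/(\mathcal{G},\mathcal{G})$, equipped with the quotient diffeology, is a diffeological groupoid and, together with the quotient map, is the abelianization of $\mathcal{G}$ in the category of diffeological groupoids.
   Context: A diffeological space is a set $X$ with a family of maps (plots) from open subsets of Euclidean spaces to $X$, containing constants, local in nature, and closed under precomposition with smooth maps; smooth maps send plots to plots. A diffeological groupoid is a groupoid object in diffeological spaces. For a surjection $q:X\to\tilde X$, the quotient diffeology consists of maps $P:U\to\tilde X$ that locally are constant or of the form $q\circ Q$ with $Q$ a plot of $X$; the subset diffeology on $Y\subset X$ consists of plots of $X$ with image in $Y$. The D-topology is the finest topology making all plots continuous. $(\mathcal{G},\mathcal{G})=\bigcup_x(\mathcal{G}_x,\mathcal{G}_x)$ is the union of the commutator subgroups of the isotropy groups $\mathcal{G}_x$. A groupoid is abelian if all isotropy groups are abelian. An abelianization of $\mathcal{G}\rightrightarrows M$ is an abelian diffeological groupoid $\mathcal{G}^{ab}\rightrightarrows M$ with a surjective smooth groupoid morphism $p:\mathcal{G}\to\mathcal{G}^{ab}$ covering $\mathrm{id}_M$ such that for every open (in the D-topology) $U\subset M$, every abelian diffeological groupoid $\mathcal{H}$ and every smooth morphism $\psi:\mathcal{G}|_U\to\mathcal{H}$ (restrictions carrying the subset diffeology) there is a unique smooth morphism $\tilde\psi:\mathcal{G}^{ab}|_U\to\mathcal{H}$ with $\tilde\psi\circ p|_U=\psi$. *)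

theory Defs
  imports "HOL-Analysis.Analysis"
begin

text \<open>R^n is represented as the set of real sequences vanishing from index n on.
  The type nat => real carries the product topology, whose subspace topology on
  euc n is the usual Euclidean topology of R^n.\<close>

definition euc :: "nat \<Rightarrow> (nat \<Rightarrow> real) set" where
  "euc n = {x. \<forall>i\<ge>n. x i = 0}"

definition open_euc :: "nat \<Rightarrow> (nat \<Rightarrow> real) set \<Rightarrow> bool" where
  "open_euc n U \<longleftrightarrow> U \<subseteq> euc n \<and> openin (top_of_set (euc n)) U"

definition partial_d :: "nat \<Rightarrow> ((nat \<Rightarrow> real) \<Rightarrow> real) \<Rightarrow> (nat \<Rightarrow> real) \<Rightarrow> real" where
  "partial_d i g x = deriv (\<lambda>t. g (x(i := x i + t))) 0"

primrec Ck :: "nat \<Rightarrow> nat \<Rightarrow> (nat \<Rightarrow> real) set \<Rightarrow> ((nat \<Rightarrow> real) \<Rightarrow> real) \<Rightarrow> bool" where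
  "Ck 0 m U g = continuous_on U g"
| "Ck (Suc k) m U g =
     (continuous_on U g \<and>
      (\<forall>i<m. \<forall>x\<in>U. (\<lambda>t. g (x(i := x i + t))) differentiable (at (0::real))) \<and>
      (\<forall>i<m. Ck k m U (partial_d i g)))"

definition smooth_fun :: "nat \<Rightarrow> (nat \<Rightarrow> real) set \<Rightarrow> ((nat \<Rightarrow> real) \<Rightarrow> real) \<Rightarrow> bool" where
  "smooth_fun m U g \<longleftrightarrow> (\<forall>k. Ck k m U g)"

definition smooth_map ::
  "nat \<Rightarrow> (nat \<Rightarrow> real) set \<Rightarrow> nat \<Rightarrow> (nat \<Rightarrow> real) set \<Rightarrow> ((nat \<Rightarrow> real) \<Rightarrow> (nat \<Rightarrow> real)) \<Rightarrow> bool" where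
  "smooth_map m V n U F \<longleftrightarrow> (\<forall>v\<in>V. F v \<in> U) \<and> (\<forall>j<n. smooth_fun m V (\<lambda>v. F v j))"

text \<open>D n U P: P restricted to U is a plot with domain the open set U of R^n.\<close>
type_synonym 'a diffeo = "nat \<Rightarrow> (nat \<Rightarrow> real) set \<Rightarrow> ((nat \<Rightarrow> real) \<Rightarrow> 'a) \<Rightarrow> bool"

definition diffeology :: "'a set \<Rightarrow> 'a diffeo \<Rightarrow> bool" where
  "diffeology X D \<longleftrightarrow>
     (\<forall>n U P. D n U P \<longrightarrow> open_euc n U \<and> P ` U \<subseteq> X) \<and>
     (\<forall>n U P Q. D n U P \<and> (\<forall>u\<in>U. P u = Q u) \<longrightarrow> D n U Q) \<and>
     (\<forall>n U x. open_euc n U \<and> x \<in> X \<longrightarrow> D n U (\<lambda>_. x)) \<and>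
     (\<forall>n U P. open_euc n U \<and> P ` U \<subseteq> X \<and>
        (\<forall>u\<in>U. \<exists>V. u \<in> V \<and> V \<subseteq> U \<and> open_euc n V \<and> D n V P) \<longrightarrow> D n U P) \<and>
     (\<forall>n U P m V F. D n U P \<and> open_euc m V \<and> smooth_map m V n U F \<longrightarrow> D m V (P \<circ> F))"

definition dsmooth :: "'a diffeo \<Rightarrow> 'b diffeo \<Rightarrow> ('a \<Rightarrow> 'b) \<Rightarrow> bool" where
  "dsmooth DX DY f \<longleftrightarrow> (\<forall>n U P. DX n U P \<longrightarrow> DY n U (f \<circ> P))"

definition smooth_between :: "'a set \<Rightarrow> 'a diffeo \<Rightarrow> 'b set \<Rightarrow> 'b diffeo \<Rightarrow> ('a \<Rightarrow> 'b) \<Rightarrow> bool" where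
  "smooth_between X DX Y DY f \<longleftrightarrow> (\<forall>x\<in>X. f x \<in> Y) \<and> dsmooth DX DY f"

definition subset_diffeo :: "'a diffeo \<Rightarrow> 'a set \<Rightarrow> 'a diffeo" where
  "subset_diffeo D Y = (\<lambda>n U P. D n U P \<and> P ` U \<subseteq> Y)"

definition prod_diffeo :: "'a diffeo \<Rightarrow> 'b diffeo \<Rightarrow> ('a \<times> 'b) diffeo" where
  "prod_diffeo DX DY = (\<lambda>n U P. DX n U (fst \<circ> P) \<and> DY n U (snd \<circ> P))"

definition quot_diffeo :: "'a diffeo \<Rightarrow> 'b set \<Rightarrow> ('a \<Rightarrow> 'b) \<Rightarrow> 'b diffeo" where
  "quot_diffeo DX Y q = (\<lambda>n U P. open_euc n U \<and> P ` U \<subseteq> Y \<and>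
     (\<forall>u\<in>U. \<exists>V. u \<in> V \<and> V \<subseteq> U \<and> open_euc n V \<and>
        ((\<exists>c. \<forall>v\<in>V. P v = c) \<or> (\<exists>Q. DX n V Q \<and> (\<forall>v\<in>V. P v = q (Q v))))))"

definition D_open :: "'a set \<Rightarrow> 'a diffeo \<Rightarrow> 'a set \<Rightarrow> bool" where
  "D_open X D A \<longleftrightarrow> A \<subseteq> X \<and> (\<forall>n U P. D n U P \<longrightarrow> open_euc n {u\<in>U. P u \<in> A})"

text \<open>Convention: comp g h (first h, then g) is defined iff src g = tgt h.\<close>
record ('g, 'm) dgpd =
  arr :: "'g set"
  obj :: "'m set"
  src :: "'g \<Rightarrow> 'm"
  tgt :: "'g \<Rightarrow> 'm"
  ide :: "'m \<Rightarrow> 'g"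
  inv :: "'g \<Rightarrow> 'g"
  comp :: "'g \<Rightarrow> 'g \<Rightarrow> 'g"
  darr :: "'g diffeo"
  dobj :: "'m diffeo"

definition composable :: "('g, 'm, 'z) dgpd_scheme \<Rightarrow> ('g \<times> 'g) set" where
  "composable G = {(g, h). g \<in> arr G \<and> h \<in> arr G \<and> src G g = tgt G h}"

definition groupoid :: "('g, 'm, 'z) dgpd_scheme \<Rightarrow> bool" where
  "groupoid G \<longleftrightarrow>
     (\<forall>g\<in>arr G. src G g \<in> obj G \<and> tgt G g \<in> obj G) \<and>
     (\<forall>x\<in>obj G. ide G x \<in> arr G \<and> src G (ide G x) = x \<and> tgt G (ide G x) = x) \<and>
     (\<forall>(g, h)\<in>composable G. comp G g h \<in> arr G \<and> src G (comp G g h) = src G h \<and>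
         tgt G (comp G g h) = tgt G g) \<and>
     (\<forall>f\<in>arr G. \<forall>g\<in>arr G. \<forall>h\<in>arr G. src G f = tgt G g \<and> src G g = tgt G h \<longrightarrow>
         comp G (comp G f g) h = comp G f (comp G g h)) \<and>
     (\<forall>g\<in>arr G. comp G (ide G (tgt G g)) g = g \<and> comp G g (ide G (src G g)) = g) \<and>
     (\<forall>g\<in>arr G. inv G g \<in> arr G \<and> src G (inv G g) = tgt G g \<and> tgt G (inv G g) = src G g \<and>
         comp G (inv G g) g = ide G (src G g) \<and> comp G g (inv G g) = ide G (tgt G g))"

definition diffeological_groupoid :: "('g, 'm, 'z) dgpd_scheme \<Rightarrow> bool" where
  "diffeological_groupoid G \<longleftrightarrow>
     groupoid G \<and> diffeology (arr G) (darr G) \<and> diffeology (obj G) (dobj G) \<and>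
     smooth_between (arr G) (darr G) (obj G) (dobj G) (src G) \<and>
     smooth_between (arr G) (darr G) (obj G) (dobj G) (tgt G) \<and>
     smooth_between (obj G) (dobj G) (arr G) (darr G) (ide G) \<and>
     smooth_between (arr G) (darr G) (arr G) (darr G) (inv G) \<and>
     smooth_between (composable G) (subset_diffeo (prod_diffeo (darr G) (darr G)) (composable G))
        (arr G) (darr G) (\<lambda>(g, h). comp G g h)"

definition isotropy :: "('g, 'm, 'z) dgpd_scheme \<Rightarrow> 'm \<Rightarrow> 'g set" where
  "isotropy G x = {g \<in> arr G. src G g = x \<and> tgt G g = x}"

definition abelian :: "('g, 'm, 'z) dgpd_scheme \<Rightarrow> bool" where
  "abelian G \<longleftrightarrow> (\<forall>x\<in>obj G. \<forall>g\<in>isotropy G x. \<forall>h\<in>isotropy G x. comp G g h = comp G h g)"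

inductive_set commutator_subgroup :: "('g, 'm, 'z) dgpd_scheme \<Rightarrow> 'm \<Rightarrow> 'g set"
  for G x where
  unit: "ide G x \<in> commutator_subgroup G x"
| commutator: "g \<in> isotropy G x \<Longrightarrow> h \<in> isotropy G x \<Longrightarrow>
     comp G (comp G g h) (comp G (inv G g) (inv G h)) \<in> commutator_subgroup G x"
| mult: "a \<in> commutator_subgroup G x \<Longrightarrow> b \<in> commutator_subgroup G x \<Longrightarrow>
     comp G a b \<in> commutator_subgroup G x"
| inverse: "a \<in> commutator_subgroup G x \<Longrightarrow> inv G a \<in> commutator_subgroup G x"

definition comm_subgroupoid :: "('g, 'm, 'z) dgpd_scheme \<Rightarrow> 'g set" where
  "comm_subgroupoid G = (\<Union>x\<in>obj G. commutator_subgroup G x)"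

definition comm_rel :: "('g, 'm, 'z) dgpd_scheme \<Rightarrow> ('g \<times> 'g) set" where
  "comm_rel G = {(g, g'). g \<in> arr G \<and> g' \<in> arr G \<and> src G g = src G g' \<and> tgt G g = tgt G g' \<and>
                          comp G g' (inv G g) \<in> comm_subgroupoid G}"

definition abel_map :: "('g, 'm, 'z) dgpd_scheme \<Rightarrow> 'g \<Rightarrow> 'g set" where
  "abel_map G g = comm_rel G `` {g}"

definition rep :: "'g set \<Rightarrow> 'g" where
  "rep c = (SOME g. g \<in> c)"

definition abel_quot :: "('g, 'm, 'z) dgpd_scheme \<Rightarrow> ('g set, 'm) dgpd" where
  "abel_quot G =
     \<lparr> arr = arr G // comm_rel G,
       obj = obj G,
       src = (\<lambda>c. src G (rep c)),
       tgt = (\<lambda>c. tgt G (rep c)),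
       ide = (\<lambda>x. abel_map G (ide G x)),
       inv = (\<lambda>c. abel_map G (inv G (rep c))),
       comp = (\<lambda>c d. abel_map G (comp G (rep c) (rep d))),
       darr = quot_diffeo (darr G) (arr G // comm_rel G) (abel_map G),
       dobj = dobj G \<rparr>"

definition restrict_gpd :: "('g, 'm) dgpd \<Rightarrow> 'm set \<Rightarrow> ('g, 'm) dgpd" where
  "restrict_gpd G U =
     G\<lparr> arr := {g \<in> arr G. src G g \<in> U \<and> tgt G g \<in> U},
        obj := U,
        darr := subset_diffeo (darr G) {g \<in> arr G. src G g \<in> U \<and> tgt G g \<in> U},
        dobj := subset_diffeo (dobj G) U \<rparr>"

definition smooth_morphism ::
  "('g, 'm) dgpd \<Rightarrow> ('h, 'k) dgpd \<Rightarrow> ('g \<Rightarrow> 'h) \<Rightarrow> ('m \<Rightarrow> 'k) \<Rightarrow> bool" where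
  "smooth_morphism G H Phi phi \<longleftrightarrow>
     smooth_between (arr G) (darr G) (arr H) (darr H) Phi \<and>
     smooth_between (obj G) (dobj G) (obj H) (dobj H) phi \<and>
     (\<forall>g\<in>arr G. src H (Phi g) = phi (src G g) \<and> tgt H (Phi g) = phi (tgt G g)) \<and>
     (\<forall>(g, h)\<in>composable G. Phi (comp G g h) = comp H (Phi g) (Phi h))"

text \<open>(A, p) is an abelianization of G; the universal property is tested against
  all abelian diffeological groupoids H whose arrow/object types are the types
  given by the itself-arguments (the main theorem quantifies over these types).\<close>
definition is_abelianization ::
  "('g, 'm) dgpd \<Rightarrow> ('q, 'm) dgpd \<Rightarrow> ('g \<Rightarrow> 'q) \<Rightarrow> 'h itself \<Rightarrow> 'k itself \<Rightarrow> bool" where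
  "is_abelianization G A p _ _ \<longleftrightarrow>
     diffeological_groupoid A \<and> abelian A \<and> obj A = obj G \<and>
     smooth_morphism G A p id \<and> p ` arr G = arr A \<and>
     (\<forall>U (H :: ('h, 'k) dgpd) Psi psi.
        D_open (obj G) (dobj G) U \<and> diffeological_groupoid H \<and> abelian H \<and>
        smooth_morphism (restrict_gpd G U) H Psi psi \<longrightarrow>
        (\<exists>Psi' psi'. smooth_morphism (restrict_gpd A U) H Psi' psi' \<and>
           (\<forall>g\<in>arr (restrict_gpd G U). Psi' (p g) = Psi g) \<and>
           (\<forall>x\<in>U. psi' x = psi x) \<and>
           (\<forall>Psi'' psi''. smooth_morphism (restrict_gpd A U) H Psi'' psi'' \<and>
              (\<forall>g\<in>arr (restrict_gpd G U). Psi'' (p g) = Psi g) \<and>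
              (\<forall>x\<in>U. psi'' x = psi x) \<longrightarrow>
              (\<forall>c\<in>arr (restrict_gpd A U). Psi'' c = Psi' c) \<and> (\<forall>x\<in>U. psi'' x = psi' x))))"

end

(* Two arrows g, g' with the same ends are identified when g' g^-1 lies in the commutator
   subgroup of the isotropy group at their target.  These subgroups are invariant under
   conjugation by arbitrary arrows, so the identification is a congruence and G/(G,G) inherits
   the groupoid structure; it is abelian because gh and hg differ by a commutator.  A plot of
   the quotient diffeology lifts locally to a plot of G (constant pieces through constant
   plots), so the structure maps of the quotient are smooth because those of G are.  A morphism
   into an abelian groupoid sends every commutator, hence all of (G,G), to identities; it is
   therefore constant on classes and factors through the quotient map, smoothly by the same
   lifting argument, and uniquely because the quotient map is surjective. *)

theory Submission
  imports Defs
begin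

locale gpd =
  fixes G :: "('g, 'm, 'z) dgpd_scheme"
  assumes groupoid: "groupoid G"
begin

lemma src_arr[simp]: "g \<in> arr G \<Longrightarrow> src G g \<in> obj G"
  and tgt_arr[simp]: "g \<in> arr G \<Longrightarrow> tgt G g \<in> obj G"
  using groupoid unfolding groupoid_def by auto

lemma ide_arr[simp]: "x \<in> obj G \<Longrightarrow> ide G x \<in> arr G"
  and src_ide[simp]: "x \<in> obj G \<Longrightarrow> src G (ide G x) = x"
  and tgt_ide[simp]: "x \<in> obj G \<Longrightarrow> tgt G (ide G x) = x"
  using groupoid unfolding groupoid_def by auto

lemma comp_arr[simp]: "g \<in> arr G \<Longrightarrow> h \<in> arr G \<Longrightarrow> src G g = tgt G h \<Longrightarrow> comp G g h \<in> arr G"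
  and src_comp[simp]: "g \<in> arr G \<Longrightarrow> h \<in> arr G \<Longrightarrow> src G g = tgt G h \<Longrightarrow> src G (comp G g h) = src G h"
  and tgt_comp[simp]: "g \<in> arr G \<Longrightarrow> h \<in> arr G \<Longrightarrow> src G g = tgt G h \<Longrightarrow> tgt G (comp G g h) = tgt G g"
  using groupoid unfolding groupoid_def composable_def by auto

lemma comp_assoc[simp]:
  "f \<in> arr G \<Longrightarrow> g \<in> arr G \<Longrightarrow> h \<in> arr G \<Longrightarrow> src G f = tgt G g \<Longrightarrow> src G g = tgt G h \<Longrightarrow>
   comp G (comp G f g) h = comp G f (comp G g h)"
  using groupoid unfolding groupoid_def by blast

lemma comp_ide_left[simp]: "g \<in> arr G \<Longrightarrow> x = tgt G g \<Longrightarrow> comp G (ide G x) g = g"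
  and comp_ide_right[simp]: "g \<in> arr G \<Longrightarrow> x = src G g \<Longrightarrow> comp G g (ide G x) = g"
  using groupoid unfolding groupoid_def by auto

lemma inv_arr[simp]: "g \<in> arr G \<Longrightarrow> inv G g \<in> arr G"
  and src_inv[simp]: "g \<in> arr G \<Longrightarrow> src G (inv G g) = tgt G g"
  and tgt_inv[simp]: "g \<in> arr G \<Longrightarrow> tgt G (inv G g) = src G g"
  and comp_inv_left[simp]: "g \<in> arr G \<Longrightarrow> comp G (inv G g) g = ide G (src G g)"
  and comp_inv_right[simp]: "g \<in> arr G \<Longrightarrow> comp G g (inv G g) = ide G (tgt G g)"
  using groupoid unfolding groupoid_def by auto

lemma comp_inv_comp[simp]:
  assumes "g \<in> arr G" "h \<in> arr G" "src G g = tgt G h"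
  shows "comp G (inv G g) (comp G g h) = h"
proof -
  have "comp G (inv G g) (comp G g h) = comp G (comp G (inv G g) g) h"
    using assms by (subst comp_assoc) auto
  then show ?thesis using assms by simp
qed

lemma comp_comp_inv[simp]:
  assumes "g \<in> arr G" "h \<in> arr G" "tgt G g = tgt G h"
  shows "comp G g (comp G (inv G g) h) = h"
proof -
  have "comp G g (comp G (inv G g) h) = comp G (comp G g (inv G g)) h"
    using assms by (subst comp_assoc) auto
  then show ?thesis using assms by simp
qed

lemma inv_unique:
  assumes "a \<in> arr G" "b \<in> arr G" "src G a = tgt G b" "comp G a b = ide G (tgt G a)"
  shows "b = inv G a"
proof -
  have "b = comp G (inv G a) (comp G a b)" using assms(1-3) by simp
  also have "\<dots> = inv G a" using assms(1,4) by (metis comp_ide_right inv_arr src_inv)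
  finally show ?thesis .
qed

lemma inv_inv[simp]: "g \<in> arr G \<Longrightarrow> inv G (inv G g) = g"
  by (rule inv_unique[symmetric]) auto

lemma inv_comp[simp]:
  "g \<in> arr G \<Longrightarrow> h \<in> arr G \<Longrightarrow> src G g = tgt G h \<Longrightarrow> inv G (comp G g h) = comp G (inv G h) (inv G g)"
  by (rule inv_unique[symmetric]) auto

lemma inv_ide[simp]: "x \<in> obj G \<Longrightarrow> inv G (ide G x) = ide G x"
  by (rule inv_unique[symmetric]) auto

lemma commutator_subgroupD:
  "n \<in> commutator_subgroup G x \<Longrightarrow> x \<in> obj G \<Longrightarrow> n \<in> arr G \<and> src G n = x \<and> tgt G n = x"
  by (induction rule: commutator_subgroup.induct) (auto simp: isotropy_def)

lemma commutator_subgroup_conj: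
  "n \<in> commutator_subgroup G x \<Longrightarrow> g \<in> arr G \<Longrightarrow> src G g = x \<Longrightarrow>
   comp G g (comp G n (inv G g)) \<in> commutator_subgroup G (tgt G g)"
proof (induction rule: commutator_subgroup.induct)
  case unit
  then show ?case using commutator_subgroup.unit[of G "tgt G g"] by simp
next
  case (commutator a b)
  let ?a = "comp G g (comp G a (inv G g))" and ?b = "comp G g (comp G b (inv G g))"
  have "?a \<in> isotropy G (tgt G g)" "?b \<in> isotropy G (tgt G g)"
    using commutator by (auto simp: isotropy_def)
  then have "comp G (comp G ?a ?b) (comp G (inv G ?a) (inv G ?b)) \<in> commutator_subgroup G (tgt G g)"
    by (rule commutator_subgroup.commutator)
  moreover have "comp G (comp G ?a ?b) (comp G (inv G ?a) (inv G ?b)) =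
     comp G g (comp G (comp G (comp G a b) (comp G (inv G a) (inv G b))) (inv G g))"
    using commutator by (auto simp: isotropy_def)
  ultimately show ?case by simp
next
  case (mult a b)
  have "x \<in> obj G" using mult by auto
  note a = commutator_subgroupD[OF mult(1) this] and b = commutator_subgroupD[OF mult(2) this]
  have "comp G (comp G g (comp G a (inv G g))) (comp G g (comp G b (inv G g)))
      \<in> commutator_subgroup G (tgt G g)"
    using mult by (auto intro!: commutator_subgroup.mult)
  moreover have "comp G (comp G g (comp G a (inv G g))) (comp G g (comp G b (inv G g))) =
     comp G g (comp G (comp G a b) (inv G g))"
    using a b mult by auto
  ultimately show ?case by simp
next
  case (inverse a)
  have "x \<in> obj G" using inverse by auto
  note a = commutator_subgroupD[OF inverse(1) this]
  have "inv G (comp G g (comp G a (inv G g))) \<in> commutator_subgroup G (tgt G g)"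
    using inverse by (auto intro!: commutator_subgroup.inverse)
  moreover have "inv G (comp G g (comp G a (inv G g))) = comp G g (comp G (inv G a) (inv G g))"
    using a inverse by auto
  ultimately show ?case by simp
qed

lemma comm_subgroupoidD:
  "n \<in> comm_subgroupoid G \<Longrightarrow> n \<in> commutator_subgroup G (tgt G n) \<and> n \<in> arr G \<and> src G n = tgt G n"
  unfolding comm_subgroupoid_def using commutator_subgroupD by fastforce

lemma comm_relD:
  "(g, g') \<in> comm_rel G \<Longrightarrow> g \<in> arr G \<and> g' \<in> arr G \<and> src G g = src G g' \<and> tgt G g = tgt G g' \<and>
   comp G g' (inv G g) \<in> commutator_subgroup G (tgt G g)"
  unfolding comm_rel_def using comm_subgroupoidD by fastforce

lemma comm_relI:
  "g \<in> arr G \<Longrightarrow> g' \<in> arr G \<Longrightarrow> src G g = src G g' \<Longrightarrow> tgt G g = tgt G g' \<Longrightarrow>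
   comp G g' (inv G g) \<in> commutator_subgroup G (tgt G g) \<Longrightarrow> (g, g') \<in> comm_rel G"
  unfolding comm_rel_def comm_subgroupoid_def by auto

lemma comm_rel_refl: "g \<in> arr G \<Longrightarrow> (g, g) \<in> comm_rel G"
  by (rule comm_relI) (auto intro: commutator_subgroup.unit)

lemma comm_rel_sym:
  assumes "(g, g') \<in> comm_rel G"
  shows "(g', g) \<in> comm_rel G"
proof -
  note r = comm_relD[OF assms]
  have "inv G (comp G g' (inv G g)) \<in> commutator_subgroup G (tgt G g)"
    by (rule commutator_subgroup.inverse) (use r in auto)
  moreover have "inv G (comp G g' (inv G g)) = comp G g (inv G g')" using r by simp
  ultimately show ?thesis using r by (intro comm_relI) auto
qed

lemma comm_rel_trans:
  assumes "(g, g') \<in> comm_rel G" "(g', g'') \<in> comm_rel G"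
  shows "(g, g'') \<in> comm_rel G"
proof -
  note r = comm_relD[OF assms(1)] comm_relD[OF assms(2)]
  have "comp G (comp G g'' (inv G g')) (comp G g' (inv G g)) \<in> commutator_subgroup G (tgt G g)"
    by (rule commutator_subgroup.mult) (use r in auto)
  moreover have "comp G (comp G g'' (inv G g')) (comp G g' (inv G g)) = comp G g'' (inv G g)"
    using r by simp
  ultimately show ?thesis using r by (intro comm_relI) auto
qed

lemma equiv_comm_rel: "equiv (arr G) (comm_rel G)"
  by (rule equivI) (auto simp: refl_on_def sym_def trans_def dest: comm_relD
      intro: comm_rel_refl comm_rel_sym comm_rel_trans)

text \<open>Normality of the commutator subgroupoid makes \<open>comm_rel\<close> a congruence: if
  \<open>g' = n g\<close> and \<open>h' = m h\<close>, then \<open>g' h' = n (g m g\<^sup>-\<^sup>1) g h\<close>.\<close>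
lemma comm_rel_comp:
  assumes "(g, g') \<in> comm_rel G" "(h, h') \<in> comm_rel G" "src G g = tgt G h"
  shows "(comp G g h, comp G g' h') \<in> comm_rel G"
proof -
  note r = comm_relD[OF assms(1)] comm_relD[OF assms(2)]
  have conj: "comp G g (comp G (comp G h' (inv G h)) (inv G g)) \<in> commutator_subgroup G (tgt G g)"
    using r assms(3) by (intro commutator_subgroup_conj) auto
  have "comp G (comp G g' (inv G g)) (comp G g (comp G (comp G h' (inv G h)) (inv G g)))
      \<in> commutator_subgroup G (tgt G g)"
    by (rule commutator_subgroup.mult) (use r conj in auto)
  moreover have "comp G (comp G g' (inv G g)) (comp G g (comp G (comp G h' (inv G h)) (inv G g)))
     = comp G (comp G g' h') (inv G (comp G g h))"
    using r assms(3) by simp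
  ultimately show ?thesis using r assms(3) by (intro comm_relI) auto
qed

lemma comm_rel_inv:
  assumes "(g, g') \<in> comm_rel G"
  shows "(inv G g, inv G g') \<in> comm_rel G"
proof -
  note r = comm_relD[OF assms]
  have "inv G (comp G g' (inv G g)) \<in> commutator_subgroup G (tgt G g)"
    by (rule commutator_subgroup.inverse) (use r in auto)
  then have "comp G (inv G g) (comp G (inv G (comp G g' (inv G g))) (inv G (inv G g)))
      \<in> commutator_subgroup G (tgt G (inv G g))"
    using r by (intro commutator_subgroup_conj) auto
  moreover have "comp G (inv G g) (comp G (inv G (comp G g' (inv G g))) (inv G (inv G g))) =
     comp G (inv G g') (inv G (inv G g))"
    using r by simp
  ultimately show ?thesis using r by (intro comm_relI) auto
qed

end

section \<open>The quotient groupoid G/(G,G)\<close>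

context gpd
begin

lemma abel_map_eq_iff:
  "g \<in> arr G \<Longrightarrow> g' \<in> arr G \<Longrightarrow> abel_map G g = abel_map G g' \<longleftrightarrow> (g, g') \<in> comm_rel G"
  unfolding abel_map_def using equiv_class_eq_iff[OF equiv_comm_rel] by metis

lemma quotient_eq_image_abel_map: "arr G // comm_rel G = abel_map G ` arr G"
  unfolding quotient_def abel_map_def by auto

lemma abel_map_in_quotient[simp]: "g \<in> arr G \<Longrightarrow> abel_map G g \<in> arr G // comm_rel G"
  by (simp add: quotient_eq_image_abel_map)

lemma quotientE_abel_map:
  assumes "c \<in> arr G // comm_rel G"
  obtains g where "g \<in> arr G" "c = abel_map G g"
  using assms by (auto simp: quotient_eq_image_abel_map)

lemma comm_rel_rep: "g \<in> arr G \<Longrightarrow> (g, rep (abel_map G g)) \<in> comm_rel G"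
proof -
  assume g: "g \<in> arr G"
  then have "g \<in> abel_map G g" unfolding abel_map_def using comm_rel_refl by auto
  then have "rep (abel_map G g) \<in> abel_map G g" unfolding rep_def by (rule someI)
  then show ?thesis unfolding abel_map_def by auto
qed

lemma rep_arr[simp]: "g \<in> arr G \<Longrightarrow> rep (abel_map G g) \<in> arr G"
  and src_rep[simp]: "g \<in> arr G \<Longrightarrow> src G (rep (abel_map G g)) = src G g"
  and tgt_rep[simp]: "g \<in> arr G \<Longrightarrow> tgt G (rep (abel_map G g)) = tgt G g"
  using comm_relD[OF comm_rel_rep] by auto

lemma abel_quot_simps[simp]:
  "arr (abel_quot G) = arr G // comm_rel G" "obj (abel_quot G) = obj G"
  "dobj (abel_quot G) = dobj G"
  "darr (abel_quot G) = quot_diffeo (darr G) (arr G // comm_rel G) (abel_map G)"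
  "ide (abel_quot G) x = abel_map G (ide G x)"
  unfolding abel_quot_def by simp_all

lemma src_abel_quot[simp]: "g \<in> arr G \<Longrightarrow> src (abel_quot G) (abel_map G g) = src G g"
  and tgt_abel_quot[simp]: "g \<in> arr G \<Longrightarrow> tgt (abel_quot G) (abel_map G g) = tgt G g"
  unfolding abel_quot_def by simp_all

lemma inv_abel_quot[simp]: "g \<in> arr G \<Longrightarrow> inv (abel_quot G) (abel_map G g) = abel_map G (inv G g)"
  unfolding abel_quot_def
  by (simp add: abel_map_eq_iff comm_rel_inv comm_rel_rep comm_rel_sym)

lemma comp_abel_quot[simp]:
  assumes "g \<in> arr G" "h \<in> arr G" "src G g = tgt G h"
  shows "comp (abel_quot G) (abel_map G g) (abel_map G h) = abel_map G (comp G g h)"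
proof -
  have "(comp G g h, comp G (rep (abel_map G g)) (rep (abel_map G h))) \<in> comm_rel G"
    using assms by (intro comm_rel_comp comm_rel_rep) auto
  then show ?thesis unfolding abel_quot_def using assms
    by (simp add: abel_map_eq_iff comm_rel_sym)
qed

lemma groupoid_abel_quot: "groupoid (abel_quot G)"
proof -
  let ?A = "abel_quot G"
  have "\<forall>c\<in>arr ?A. src ?A c \<in> obj ?A \<and> tgt ?A c \<in> obj ?A"
    "\<forall>x\<in>obj ?A. ide ?A x \<in> arr ?A \<and> src ?A (ide ?A x) = x \<and> tgt ?A (ide ?A x) = x"
    "\<forall>c\<in>arr ?A. comp ?A (ide ?A (tgt ?A c)) c = c \<and> comp ?A c (ide ?A (src ?A c)) = c"
    "\<forall>c\<in>arr ?A. inv ?A c \<in> arr ?A \<and> src ?A (inv ?A c) = tgt ?A c \<and> tgt ?A (inv ?A c) = src ?A c \<and>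
       comp ?A (inv ?A c) c = ide ?A (src ?A c) \<and> comp ?A c (inv ?A c) = ide ?A (tgt ?A c)"
    "\<forall>c\<in>arr ?A. \<forall>d\<in>arr ?A. \<forall>e\<in>arr ?A. src ?A c = tgt ?A d \<and> src ?A d = tgt ?A e \<longrightarrow>
       comp ?A (comp ?A c d) e = comp ?A c (comp ?A d e)"
    by (auto elim!: quotientE_abel_map)
  moreover have "\<forall>(c, d)\<in>composable ?A. comp ?A c d \<in> arr ?A \<and> src ?A (comp ?A c d) = src ?A d \<and>
       tgt ?A (comp ?A c d) = tgt ?A c"
    unfolding composable_def by (auto elim!: quotientE_abel_map)
  ultimately show ?thesis unfolding groupoid_def by blast
qed

lemma abelian_abel_quot: "abelian (abel_quot G)"
  unfolding abelian_def
proof (intro ballI)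
  fix x c d
  assume "c \<in> isotropy (abel_quot G) x" "d \<in> isotropy (abel_quot G) x"
  then obtain g h where "c = abel_map G g" "d = abel_map G h" and gh: "g \<in> isotropy G x" "h \<in> isotropy G x"
    unfolding isotropy_def abel_quot_simps
    by (elim CollectE conjE quotientE_abel_map) (simp add: isotropy_def)
  moreover have "comp G (comp G h g) (comp G (inv G h) (inv G g)) \<in> commutator_subgroup G x"
    using gh by (rule commutator_subgroup.commutator[rotated])
  ultimately show "comp (abel_quot G) c d = comp (abel_quot G) d c"
    by (auto simp: isotropy_def abel_map_eq_iff intro!: comm_relI)
qed

end

section \<open>Plots and the quotient diffeology\<close>

lemma Ck_subset: "Ck k m U g \<Longrightarrow> W \<subseteq> U \<Longrightarrow> Ck k m W g"
  by (induction k arbitrary: g) (auto intro: continuous_on_subset)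

lemma smooth_map_subset:
  "smooth_map m V n U F \<Longrightarrow> W \<subseteq> V \<Longrightarrow> F ` W \<subseteq> U' \<Longrightarrow> smooth_map m W n U' F"
  unfolding smooth_map_def smooth_fun_def using Ck_subset by blast

lemma Ck_const: "Ck k m U (\<lambda>_. c)"
proof -
  have "partial_d i (\<lambda>_. c) = (\<lambda>_. 0)" for i c
    unfolding partial_d_def by (rule ext) (rule DERIV_imp_deriv, rule DERIV_const)
  then show ?thesis by (induction k arbitrary: c) simp_all
qed

lemma partial_d_coordinate: "partial_d i (\<lambda>v. v j) = (\<lambda>_. if i = j then 1 else 0)"
proof
  fix x :: "nat \<Rightarrow> real"
  have "DERIV (\<lambda>t. (x(i := x i + t)) j) 0 :> (if i = j then 1 else 0)"
    by (cases "i = j") (auto intro!: derivative_eq_intros)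
  then show "partial_d i (\<lambda>v. v j) x = (if i = j then 1 else 0)"
    unfolding partial_d_def by (rule DERIV_imp_deriv)
qed

lemma Ck_coordinate: "Ck k m U (\<lambda>v. v j)"
proof (cases k)
  case 0
  then show ?thesis using continuous_on_subset[OF continuous_on_product_coordinates] by simp
next
  case (Suc k')
  have "(\<lambda>t. (x(i := x i + t)) j) differentiable (at (0::real))" for x :: "nat \<Rightarrow> real" and i
    by (cases "i = j") (auto intro!: derivative_intros)
  then show ?thesis using Suc continuous_on_subset[OF continuous_on_product_coordinates]
    by (auto simp: partial_d_coordinate intro: Ck_const)
qed

lemma smooth_map_id: "V \<subseteq> U \<Longrightarrow> smooth_map n V n U id"
  unfolding smooth_map_def smooth_fun_def using Ck_coordinate by auto

lemma plot_open: "diffeology X D \<Longrightarrow> D n U P \<Longrightarrow> open_euc n U"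
  using diffeology_def[THEN iffD1, THEN conjunct1] by blast

lemma plot_image: "diffeology X D \<Longrightarrow> D n U P \<Longrightarrow> u \<in> U \<Longrightarrow> P u \<in> X"
  using diffeology_def[THEN iffD1, THEN conjunct1] by blast

lemma plot_cong: "diffeology X D \<Longrightarrow> D n U P \<Longrightarrow> (\<And>u. u \<in> U \<Longrightarrow> P u = Q u) \<Longrightarrow> D n U Q"
  using diffeology_def[THEN iffD1, THEN conjunct2, THEN conjunct1] by blast

lemma plot_const: "diffeology X D \<Longrightarrow> open_euc n U \<Longrightarrow> x \<in> X \<Longrightarrow> D n U (\<lambda>_. x)"
  using diffeology_def[THEN iffD1, THEN conjunct2, THEN conjunct2, THEN conjunct1] by blast

lemma plot_local:
  assumes "diffeology X D" "open_euc n U" "P ` U \<subseteq> X"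
    "\<And>u. u \<in> U \<Longrightarrow> \<exists>V. u \<in> V \<and> V \<subseteq> U \<and> open_euc n V \<and> D n V P"
  shows "D n U P"
  using assms(2-4)
  by (intro diffeology_def[THEN iffD1, THEN conjunct2, THEN conjunct2, THEN conjunct2, THEN conjunct1,
        rule_format, OF assms(1)] conjI ballI)

lemma plot_comp:
  "diffeology X D \<Longrightarrow> D n U P \<Longrightarrow> open_euc m V \<Longrightarrow> smooth_map m V n U F \<Longrightarrow> D m V (P \<circ> F)"
  using diffeology_def[THEN iffD1, THEN conjunct2, THEN conjunct2, THEN conjunct2, THEN conjunct2]
  by blast

lemma plot_restrict: "diffeology X D \<Longrightarrow> D n U P \<Longrightarrow> open_euc n V \<Longrightarrow> V \<subseteq> U \<Longrightarrow> D n V P"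
  using plot_comp[of X D n U P n V id] smooth_map_id by simp

lemma dsmoothD: "dsmooth DX DY f \<Longrightarrow> DX n U P \<Longrightarrow> DY n U (f \<circ> P)"
  unfolding dsmooth_def by blast

lemma dsmooth_compose: "dsmooth D1 D2 f \<Longrightarrow> dsmooth D2 D3 g \<Longrightarrow> dsmooth D1 D3 (g \<circ> f)"
  unfolding dsmooth_def by (simp add: comp_assoc)

lemma open_euc_Int: "open_euc n U \<Longrightarrow> open_euc n V \<Longrightarrow> open_euc n (U \<inter> V)"
  unfolding open_euc_def by auto

lemma smooth_map_continuous_on:
  assumes F: "smooth_map m V n U F" and U: "open_euc n U"
  shows "continuous_on V F"
proof (rule continuous_on_coordinatewise_then_product)
  fix j
  show "continuous_on V (\<lambda>x. F x j)"
  proof (cases "j < n")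
    case True
    then show ?thesis using F unfolding smooth_map_def smooth_fun_def by (metis Ck.simps(1))
  next
    case False
    then have "\<forall>v\<in>V. F v j = 0" using F U unfolding smooth_map_def open_euc_def euc_def by auto
    then show ?thesis using continuous_on_cong[of V V "\<lambda>x. F x j" "\<lambda>_. 0"] by simp
  qed
qed

lemma open_euc_preimage:
  assumes V: "open_euc m V" and F: "smooth_map m V n U F" and U: "open_euc n U" and W: "open_euc n W"
  shows "open_euc m {v \<in> V. F v \<in> W}"
proof -
  obtain T where T: "open T" "W = euc n \<inter> T" using W unfolding open_euc_def openin_open by blast
  obtain S where S: "open S" "V = euc m \<inter> S" using V unfolding open_euc_def openin_open by blast
  obtain A where A: "open A" "A \<inter> V = F -` T \<inter> V"
    using smooth_map_continuous_on[OF F U] T(1) unfolding continuous_on_open_invariant by blast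
  have "F v \<in> euc n" if "v \<in> V" for v using F U that unfolding smooth_map_def open_euc_def by auto
  then have "{v \<in> V. F v \<in> W} = euc m \<inter> (S \<inter> A)" using A S T by auto
  then show ?thesis unfolding open_euc_def openin_open using S A by auto
qed

abbreviation quot_local_form ::
    "'a diffeo \<Rightarrow> ('a \<Rightarrow> 'b) \<Rightarrow> nat \<Rightarrow> (nat \<Rightarrow> real) set \<Rightarrow> ((nat \<Rightarrow> real) \<Rightarrow> 'b) \<Rightarrow> bool"
  where "quot_local_form D q n V P \<equiv> (\<exists>c. \<forall>v\<in>V. P v = c) \<or> (\<exists>Q. D n V Q \<and> (\<forall>v\<in>V. P v = q (Q v)))"

lemma quot_diffeoI:
  "open_euc n U \<Longrightarrow> P ` U \<subseteq> Y \<Longrightarrow>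
   (\<And>u. u \<in> U \<Longrightarrow> \<exists>V. u \<in> V \<and> V \<subseteq> U \<and> open_euc n V \<and> quot_local_form D q n V P) \<Longrightarrow>
   quot_diffeo D Y q n U P"
  unfolding quot_diffeo_def by blast

lemma quot_diffeoD:
  assumes "quot_diffeo D Y q n U P"
  shows "open_euc n U" "P ` U \<subseteq> Y"
    "u \<in> U \<Longrightarrow> \<exists>V. u \<in> V \<and> V \<subseteq> U \<and> open_euc n V \<and> quot_local_form D q n V P"
  using assms unfolding quot_diffeo_def by blast+

lemma quot_diffeo_cong:
  assumes P: "quot_diffeo D Y q n U P" and PP': "\<forall>u\<in>U. P u = P' u"
  shows "quot_diffeo D Y q n U P'"
proof (rule quot_diffeoI)
  show "open_euc n U" using quot_diffeoD(1)[OF P] .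
  show "P' ` U \<subseteq> Y" using quot_diffeoD(2)[OF P] PP' by auto
  fix u assume u: "u \<in> U"
  obtain V where V: "u \<in> V" "V \<subseteq> U" "open_euc n V" "quot_local_form D q n V P"
    using quot_diffeoD(3)[OF P u] by blast
  have eq: "\<forall>v\<in>V. P' v = P v" using PP' V(2) by auto
  from V(4) have "quot_local_form D q n V P'"
  proof (elim disjE exE conjE)
    fix c assume "\<forall>v\<in>V. P v = c"
    then show ?thesis using eq by (intro disjI1 exI[of _ c]) simp
  next
    fix Q assume "D n V Q" "\<forall>v\<in>V. P v = q (Q v)"
    then show ?thesis using eq by (intro disjI2 exI[of _ Q]) simp
  qed
  then show "\<exists>V. u \<in> V \<and> V \<subseteq> U \<and> open_euc n V \<and> quot_local_form D q n V P'" using V by blast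
qed

lemma quot_diffeo_local:
  assumes U: "open_euc n U" and P: "P ` U \<subseteq> Y"
    and local: "\<forall>u\<in>U. \<exists>V. u \<in> V \<and> V \<subseteq> U \<and> open_euc n V \<and> quot_diffeo D Y q n V P"
  shows "quot_diffeo D Y q n U P"
proof (rule quot_diffeoI[OF U P])
  fix u assume "u \<in> U"
  then obtain V where V: "u \<in> V" "V \<subseteq> U" "quot_diffeo D Y q n V P" using local by blast
  obtain W where W: "u \<in> W" "W \<subseteq> V" "open_euc n W" "quot_local_form D q n W P"
    using quot_diffeoD(3)[OF V(3) V(1)] by blast
  show "\<exists>V. u \<in> V \<and> V \<subseteq> U \<and> open_euc n V \<and> quot_local_form D q n V P"
    by (rule exI[of _ W]) (use W V(2) in blast)
qed

lemma quot_diffeo_comp: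
  assumes X: "diffeology X D" and P: "quot_diffeo D Y q n U P"
    and V: "open_euc m V" and F: "smooth_map m V n U F"
  shows "quot_diffeo D Y q m V (P \<circ> F)"
proof (rule quot_diffeoI[OF V])
  have FV: "\<And>v. v \<in> V \<Longrightarrow> F v \<in> U" using F unfolding smooth_map_def by blast
  then show "(P \<circ> F) ` V \<subseteq> Y" using quot_diffeoD(2)[OF P] by auto
  fix v assume v: "v \<in> V"
  obtain W where W: "F v \<in> W" "W \<subseteq> U" "open_euc n W" "quot_local_form D q n W P"
    using quot_diffeoD(3)[OF P FV[OF v]] by blast
  define W' where "W' = {w \<in> V. F w \<in> W}"
  have W': "open_euc m W'"
    unfolding W'_def by (rule open_euc_preimage[OF V F quot_diffeoD(1)[OF P] W(3)])
  have FW: "smooth_map m W' n W F" unfolding W'_def by (rule smooth_map_subset[OF F]) auto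
  have "quot_local_form D q m W' (P \<circ> F)"
    using W(4)
  proof
    assume "\<exists>c. \<forall>w\<in>W. P w = c"
    then show ?thesis unfolding W'_def by auto
  next
    assume "\<exists>Q. D n W Q \<and> (\<forall>w\<in>W. P w = q (Q w))"
    then obtain Q where Q: "D n W Q" "\<forall>w\<in>W. P w = q (Q w)" by blast
    have "D m W' (Q \<circ> F)" by (rule plot_comp[OF X Q(1) W' FW])
    moreover have "\<forall>w\<in>W'. (P \<circ> F) w = q ((Q \<circ> F) w)" using Q(2) unfolding W'_def by auto
    ultimately show ?thesis by blast
  qed
  moreover have "v \<in> W'" "W' \<subseteq> V" using v W(1) unfolding W'_def by auto
  ultimately show "\<exists>V'. v \<in> V' \<and> V' \<subseteq> V \<and> open_euc m V' \<and> quot_local_form D q m V' (P \<circ> F)"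
    using W' by blast
qed

lemma diffeology_quot_diffeo:
  assumes "diffeology X D"
  shows "diffeology Y (quot_diffeo D Y q)"
  unfolding diffeology_def
proof (intro conjI allI impI; (elim conjE)?)
  fix n U P assume "quot_diffeo D Y q n U P"
  then show "open_euc n U" "P ` U \<subseteq> Y" by (rule quot_diffeoD)+
next
  fix n U P Q assume "quot_diffeo D Y q n U P" "\<forall>u\<in>U. P u = Q u"
  then show "quot_diffeo D Y q n U Q" by (rule quot_diffeo_cong)
next
  fix n U y assume "open_euc n U" "y \<in> Y"
  then show "quot_diffeo D Y q n U (\<lambda>_. y)"
    by (intro quot_diffeoI exI[of _ U] conjI disjI1) auto
next
  fix n U P assume "open_euc n U" "P ` U \<subseteq> Y"
    "\<forall>u\<in>U. \<exists>V. u \<in> V \<and> V \<subseteq> U \<and> open_euc n V \<and> quot_diffeo D Y q n V P"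
  then show "quot_diffeo D Y q n U P" by (rule quot_diffeo_local)
next
  fix n U P m V F assume "quot_diffeo D Y q n U P" "open_euc m V" "smooth_map m V n U F"
  then show "quot_diffeo D Y q m V (P \<circ> F)" by (rule quot_diffeo_comp[OF assms])
qed

lemma quot_diffeo_of_plot:
  assumes X: "diffeology X D" and Q: "D n U Q" and q: "q ` X \<subseteq> Y" and P: "\<And>u. u \<in> U \<Longrightarrow> P u = q (Q u)"
  shows "quot_diffeo D Y q n U P"
proof (rule quot_diffeoI)
  show "open_euc n U" using plot_open[OF X Q] .
  show "P ` U \<subseteq> Y" unfolding image_subset_iff using plot_image[OF X Q] q P by blast
  show "\<exists>V. u \<in> V \<and> V \<subseteq> U \<and> open_euc n V \<and> quot_local_form D q n V P" if "u \<in> U" for u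
    by (intro exI[of _ U] conjI disjI2 exI[of _ Q]) (use that \<open>open_euc n U\<close> Q P in auto)
qed

text \<open>Constant pieces of a quotient plot lift as well, through a constant plot; this is
  where surjectivity of \<open>q\<close> enters.\<close>
lemma quot_diffeo_lift_local:
  assumes X: "diffeology X D" and P: "quot_diffeo D Y q n U P" and Y: "Y \<subseteq> q ` X" and u: "u \<in> U"
  obtains V Q where "u \<in> V" "V \<subseteq> U" "open_euc n V" "D n V Q" "\<forall>v\<in>V. P v = q (Q v)"
proof -
  obtain V where V: "u \<in> V" "V \<subseteq> U" "open_euc n V" "quot_local_form D q n V P"
    using quot_diffeoD(3)[OF P u] by blast
  from V(4) have "\<exists>Q. D n V Q \<and> (\<forall>v\<in>V. P v = q (Q v))"
  proof
    assume "\<exists>c. \<forall>v\<in>V. P v = c"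
    then obtain c where c: "\<forall>v\<in>V. P v = c" by blast
    have "c = P u" using c V(1) by simp
    also have "P u \<in> Y" using quot_diffeoD(2)[OF P] u by (rule subsetD[OF _ imageI])
    finally obtain x where x: "x \<in> X" "c = q x" using Y by blast
    show ?thesis
      by (rule exI[of _ "\<lambda>_. x"]) (use plot_const[OF X V(3) x(1)] c x(2) in auto)
  qed
  then obtain Q where "D n V Q" "\<forall>v\<in>V. P v = q (Q v)" by blast
  with V(1-3) show ?thesis by (rule that)
qed

lemma quot_diffeo_lift_local2:
  assumes X: "diffeology X D" and Y: "Y \<subseteq> q ` X"
    and P1: "quot_diffeo D Y q n U P1" and P2: "quot_diffeo D Y q n U P2" and u: "u \<in> U"
  obtains V Q1 Q2 where "u \<in> V" "V \<subseteq> U" "open_euc n V" "D n V Q1" "D n V Q2"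
    "\<And>v. v \<in> V \<Longrightarrow> P1 v = q (Q1 v) \<and> P2 v = q (Q2 v)"
proof -
  obtain V1 Q1 where V1: "u \<in> V1" "V1 \<subseteq> U" "open_euc n V1" "D n V1 Q1" "\<forall>v\<in>V1. P1 v = q (Q1 v)"
    using quot_diffeo_lift_local[OF X P1 Y u] .
  obtain V2 Q2 where V2: "u \<in> V2" "V2 \<subseteq> U" "open_euc n V2" "D n V2 Q2" "\<forall>v\<in>V2. P2 v = q (Q2 v)"
    using quot_diffeo_lift_local[OF X P2 Y u] .
  have V: "open_euc n (V1 \<inter> V2)" using V1(3) V2(3) by (rule open_euc_Int)
  show ?thesis
  proof (rule that[of "V1 \<inter> V2" Q1 Q2])
    show "D n (V1 \<inter> V2) Q1" using plot_restrict[OF X V1(4) V Int_lower1] .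
    show "D n (V1 \<inter> V2) Q2" using plot_restrict[OF X V2(4) V Int_lower2] .
  qed (use V1 V2 V in auto)
qed

lemma dsmooth_subset_quot_diffeo:
  assumes X: "diffeology X D" and Z: "diffeology Z DZ" and Y: "Y \<subseteq> q ` X" and f: "f ` S \<subseteq> Z"
    and lift: "\<And>n V Q. D n V Q \<Longrightarrow> (q \<circ> Q) ` V \<subseteq> S \<Longrightarrow> DZ n V (f \<circ> q \<circ> Q)"
  shows "dsmooth (subset_diffeo (quot_diffeo D Y q) S) DZ f"
  unfolding dsmooth_def subset_diffeo_def
proof (intro allI impI, elim conjE)
  fix n U P assume P: "quot_diffeo D Y q n U P" and S: "P ` U \<subseteq> S"
  show "DZ n U (f \<circ> P)"
  proof (rule plot_local[OF Z quot_diffeoD(1)[OF P]])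
    show "(f \<circ> P) ` U \<subseteq> Z" using S f by auto
    fix u assume "u \<in> U"
    then obtain V Q where V: "u \<in> V" "V \<subseteq> U" "open_euc n V" "D n V Q" "\<forall>v\<in>V. P v = q (Q v)"
      by (rule quot_diffeo_lift_local[OF X P Y])
    have "(q \<circ> Q) ` V \<subseteq> S" using V(2,5) S by (metis comp_apply image_subset_iff subsetD)
    then have "DZ n V (f \<circ> q \<circ> Q)" by (rule lift[OF V(4)])
    then have "DZ n V (f \<circ> P)" by (rule plot_cong[OF Z]) (use V in auto)
    then show "\<exists>V. u \<in> V \<and> V \<subseteq> U \<and> open_euc n V \<and> DZ n V (f \<circ> P)" using V by blast
  qed
qed

lemma smooth_between_quot_diffeo:
  assumes X: "diffeology X D" and Z: "diffeology Z DZ" and Y: "Y = q ` X" and f: "f ` Y \<subseteq> Z"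
    and g: "dsmooth D DZ g" and fg: "\<And>x. x \<in> X \<Longrightarrow> f (q x) = g x"
  shows "smooth_between Y (quot_diffeo D Y q) Z DZ f"
proof -
  have "subset_diffeo (quot_diffeo D Y q) Y = quot_diffeo D Y q"
    unfolding subset_diffeo_def quot_diffeo_def by (intro ext) auto
  moreover have "dsmooth (subset_diffeo (quot_diffeo D Y q) Y) DZ f"
  proof (rule dsmooth_subset_quot_diffeo[OF X Z _ f])
    fix n V Q assume Q: "D n V Q"
    then have "DZ n V (g \<circ> Q)" using g unfolding dsmooth_def by blast
    then show "DZ n V (f \<circ> q \<circ> Q)"
      by (rule plot_cong[OF Z]) (use fg plot_image[OF X Q] in auto)
  qed (use Y in simp)
  ultimately show ?thesis using f unfolding smooth_between_def by auto
qed

section \<open>Morphisms into abelian groupoids\<close>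

locale gpd_hom = G: gpd G + H: gpd H
  for G :: "('g, 'm, 'z) dgpd_scheme" and H :: "('h, 'k, 'w) dgpd_scheme" +
  fixes Phi :: "'g \<Rightarrow> 'h" and phi :: "'m \<Rightarrow> 'k"
  assumes arr_map[simp]: "g \<in> arr G \<Longrightarrow> Phi g \<in> arr H"
    and obj_map[simp]: "x \<in> obj G \<Longrightarrow> phi x \<in> obj H"
    and src_map[simp]: "g \<in> arr G \<Longrightarrow> src H (Phi g) = phi (src G g)"
    and tgt_map[simp]: "g \<in> arr G \<Longrightarrow> tgt H (Phi g) = phi (tgt G g)"
    and comp_map: "g \<in> arr G \<Longrightarrow> h \<in> arr G \<Longrightarrow> src G g = tgt G h \<Longrightarrow>
      Phi (comp G g h) = comp H (Phi g) (Phi h)"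
begin

lemma ide_map: "x \<in> obj G \<Longrightarrow> Phi (ide G x) = ide H (phi x)"
proof -
  assume x: "x \<in> obj G"
  let ?e = "Phi (ide G x)"
  have idem: "comp H ?e ?e = ?e" using comp_map[of "ide G x" "ide G x"] x by simp
  have "ide H (phi x) = comp H (inv H ?e) ?e" using x by simp
  also have "\<dots> = comp H (inv H ?e) (comp H ?e ?e)" by (simp only: idem)
  also have "\<dots> = ?e" using x by simp
  finally show ?thesis by simp
qed

lemma inv_map: "g \<in> arr G \<Longrightarrow> Phi (inv G g) = inv H (Phi g)"
  by (rule H.inv_unique) (simp_all flip: comp_map add: ide_map)

lemma commutator_subgroup_map:
  assumes "abelian H"
  shows "n \<in> commutator_subgroup G x \<Longrightarrow> x \<in> obj G \<Longrightarrow> Phi n = ide H (phi x)"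
proof (induction rule: commutator_subgroup.induct)
  case unit
  then show ?case by (rule ide_map)
next
  case (commutator g h)
  then have gh: "g \<in> arr G" "h \<in> arr G" "src G g = x" "tgt G g = x" "src G h = x" "tgt G h = x"
    by (auto simp: isotropy_def)
  have "Phi g \<in> isotropy H (phi x)" "Phi h \<in> isotropy H (phi x)" "phi x \<in> obj H"
    using gh by (auto simp: isotropy_def)
  then have ab: "comp H (Phi g) (Phi h) = comp H (Phi h) (Phi g)"
    using assms unfolding abelian_def by blast
  have "Phi (comp G (comp G g h) (comp G (inv G g) (inv G h))) =
     comp H (comp H (Phi g) (Phi h)) (comp H (inv H (Phi g)) (inv H (Phi h)))"
    using gh by (simp add: comp_map inv_map)
  also have "\<dots> = comp H (comp H (Phi h) (Phi g)) (comp H (inv H (Phi g)) (inv H (Phi h)))"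
    by (simp only: ab)
  also have "\<dots> = ide H (phi x)" using gh by simp
  finally show ?case .
next
  case (mult a b)
  then show ?case using G.commutator_subgroupD by (simp add: comp_map)
next
  case (inverse a)
  then show ?case using G.commutator_subgroupD by (simp add: inv_map)
qed

lemma comm_rel_map:
  assumes "abelian H" and r: "(g, g') \<in> comm_rel G"
  shows "Phi g' = Phi g"
proof -
  let ?n = "comp G g' (inv G g)"
  note g = G.comm_relD[OF r]
  then have n: "?n \<in> arr G" "src G ?n = tgt G g" "tgt G ?n = tgt G g"
    using G.commutator_subgroupD[of ?n "tgt G g"] by simp_all
  have "Phi g' = Phi (comp G ?n g)" using g by simp
  also have "\<dots> = comp H (Phi ?n) (Phi g)" by (rule comp_map) (use g n in simp_all)
  also have "Phi ?n = ide H (phi (tgt G g))"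
    by (rule commutator_subgroup_map[OF assms(1)]) (use g in auto)
  also have "comp H (ide H (phi (tgt G g))) (Phi g) = Phi g" using g by simp
  finally show ?thesis .
qed

end

lemma restrict_gpd_simps[simp]:
  "arr (restrict_gpd G U) = {g \<in> arr G. src G g \<in> U \<and> tgt G g \<in> U}"
  "obj (restrict_gpd G U) = U" "src (restrict_gpd G U) = src G" "tgt (restrict_gpd G U) = tgt G"
  "comp (restrict_gpd G U) = comp G" "inv (restrict_gpd G U) = inv G" "ide (restrict_gpd G U) = ide G"
  "darr (restrict_gpd G U) = subset_diffeo (darr G) {g \<in> arr G. src G g \<in> U \<and> tgt G g \<in> U}"
  "dobj (restrict_gpd G U) = subset_diffeo (dobj G) U"
  unfolding restrict_gpd_def by simp_all

lemma groupoid_restrict_gpd: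
  assumes "groupoid G" "U \<subseteq> obj G"
  shows "groupoid (restrict_gpd G U)"
proof -
  interpret gpd G by (rule gpd.intro) fact
  show ?thesis using assms(2) unfolding groupoid_def composable_def by auto
qed

lemma commutator_subgroup_restrict_gpd:
  "n \<in> commutator_subgroup G x \<Longrightarrow> x \<in> U \<Longrightarrow> n \<in> commutator_subgroup (restrict_gpd G U) x"
proof (induction rule: commutator_subgroup.induct)
  case unit
  then show ?case using commutator_subgroup.unit[of "restrict_gpd G U" x] by simp
next
  case (commutator g h)
  then show ?case
    using commutator_subgroup.commutator[of g "restrict_gpd G U" x h] by (simp add: isotropy_def)
next
  case (mult a b)
  then show ?case using commutator_subgroup.mult[of a "restrict_gpd G U" x b] by simp
next
  case (inverse a)
  then show ?case using commutator_subgroup.inverse[of a "restrict_gpd G U" x] by simp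
qed

lemma gpd_hom_if_smooth_morphism:
  "groupoid G \<Longrightarrow> groupoid H \<Longrightarrow> smooth_morphism G H Phi phi \<Longrightarrow> gpd_hom G H Phi phi"
  unfolding smooth_morphism_def smooth_between_def composable_def
  by (simp add: gpd_hom_def gpd_hom_axioms_def gpd_def)

section \<open>The quotient is a diffeological groupoid\<close>

locale diffeo_gpd = gpd G for G :: "('g, 'm) dgpd" +
  assumes diffeological_groupoid: "diffeological_groupoid G"
begin

lemma diffeology_arr: "diffeology (arr G) (darr G)"
  and diffeology_obj: "diffeology (obj G) (dobj G)"
  and dsmooth_src: "dsmooth (darr G) (dobj G) (src G)"
  and dsmooth_tgt: "dsmooth (darr G) (dobj G) (tgt G)"
  and dsmooth_ide: "dsmooth (dobj G) (darr G) (ide G)"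
  and dsmooth_inv: "dsmooth (darr G) (darr G) (inv G)"
  and dsmooth_comp:
    "dsmooth (subset_diffeo (prod_diffeo (darr G) (darr G)) (composable G)) (darr G) (\<lambda>(g, h). comp G g h)"
  using diffeological_groupoid unfolding diffeological_groupoid_def smooth_between_def by blast+

lemma diffeology_abel_quot_arr: "diffeology (arr (abel_quot G)) (darr (abel_quot G))"
  by (simp add: diffeology_quot_diffeo[OF diffeology_arr])

lemma plot_abel_map: "darr G n U Q \<Longrightarrow> darr (abel_quot G) n U (abel_map G \<circ> Q)"
  unfolding abel_quot_simps
  by (rule quot_diffeo_of_plot[OF diffeology_arr]) (auto simp: image_subset_iff)

lemma dsmooth_abel_map: "dsmooth (darr G) (darr (abel_quot G)) (abel_map G)"
  unfolding dsmooth_def using plot_abel_map by blast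

lemma smooth_between_src_abel_quot:
  "smooth_between (arr (abel_quot G)) (darr (abel_quot G)) (obj (abel_quot G)) (dobj (abel_quot G))
     (src (abel_quot G))"
  unfolding abel_quot_simps
  by (rule smooth_between_quot_diffeo[OF diffeology_arr diffeology_obj quotient_eq_image_abel_map _
        dsmooth_src]) (auto elim!: quotientE_abel_map)

lemma smooth_between_tgt_abel_quot:
  "smooth_between (arr (abel_quot G)) (darr (abel_quot G)) (obj (abel_quot G)) (dobj (abel_quot G))
     (tgt (abel_quot G))"
  unfolding abel_quot_simps
  by (rule smooth_between_quot_diffeo[OF diffeology_arr diffeology_obj quotient_eq_image_abel_map _
        dsmooth_tgt]) (auto elim!: quotientE_abel_map)

lemma smooth_between_inv_abel_quot:
  "smooth_between (arr (abel_quot G)) (darr (abel_quot G)) (arr (abel_quot G)) (darr (abel_quot G))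
     (inv (abel_quot G))"
proof -
  note Z = diffeology_abel_quot_arr[unfolded abel_quot_simps]
  note g = dsmooth_compose[OF dsmooth_inv dsmooth_abel_map, unfolded abel_quot_simps]
  show ?thesis unfolding abel_quot_simps
    by (rule smooth_between_quot_diffeo[OF diffeology_arr Z quotient_eq_image_abel_map _ g])
      (auto elim!: quotientE_abel_map)
qed

lemma smooth_between_ide_abel_quot:
  "smooth_between (obj (abel_quot G)) (dobj (abel_quot G)) (arr (abel_quot G)) (darr (abel_quot G))
     (ide (abel_quot G))"
proof -
  have "ide (abel_quot G) = abel_map G \<circ> ide G" by (simp add: fun_eq_iff)
  then show ?thesis
    using dsmooth_compose[OF dsmooth_ide dsmooth_abel_map] by (simp add: smooth_between_def)
qed

lemma smooth_between_comp_abel_quot: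
  "smooth_between (composable (abel_quot G))
     (subset_diffeo (prod_diffeo (darr (abel_quot G)) (darr (abel_quot G))) (composable (abel_quot G)))
     (arr (abel_quot G)) (darr (abel_quot G)) (\<lambda>(c, d). comp (abel_quot G) c d)"
proof -
  let ?A = "abel_quot G" and ?Y = "arr G // comm_rel G"
  let ?m = "\<lambda>(c, d). comp ?A c d"
  have comp_arr: "?m p \<in> arr ?A" if "p \<in> composable ?A" for p
    using that unfolding composable_def by (auto elim!: quotientE_abel_map)
  have "darr ?A n U (?m \<circ> P)"
    if P: "subset_diffeo (prod_diffeo (darr ?A) (darr ?A)) (composable ?A) n U P" for n U P
  proof (rule plot_local[OF diffeology_abel_quot_arr])
    have P1: "quot_diffeo (darr G) ?Y (abel_map G) n U (fst \<circ> P)"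
      and P2: "quot_diffeo (darr G) ?Y (abel_map G) n U (snd \<circ> P)"
      and PC: "P ` U \<subseteq> composable ?A"
      using P by (simp_all add: subset_diffeo_def prod_diffeo_def)
    show "open_euc n U" using quot_diffeoD(1)[OF P1] .
    show "(?m \<circ> P) ` U \<subseteq> arr ?A" using PC comp_arr unfolding image_subset_iff comp_apply by blast
    fix u assume "u \<in> U"
    with diffeology_arr quotient_eq_image_abel_map[THEN equalityD1] P1 P2
    obtain V Q1 Q2 where V: "u \<in> V" "V \<subseteq> U" "open_euc n V" "darr G n V Q1" "darr G n V Q2"
      and Q: "\<And>v. v \<in> V \<Longrightarrow> fst (P v) = abel_map G (Q1 v) \<and> snd (P v) = abel_map G (Q2 v)"
      by (rule quot_diffeo_lift_local2) auto
    have arrs: "Q1 v \<in> arr G" "Q2 v \<in> arr G" if "v \<in> V" for v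
      using plot_image[OF diffeology_arr V(4) that] plot_image[OF diffeology_arr V(5) that] .
    have composable: "src G (Q1 v) = tgt G (Q2 v)" if "v \<in> V" for v
    proof -
      have "P v \<in> composable ?A" using PC V(1,2) that by auto
      then show ?thesis using Q[OF that] arrs[OF that] by (cases "P v") (simp add: composable_def)
    qed
    have "subset_diffeo (prod_diffeo (darr G) (darr G)) (composable G) n V (\<lambda>v. (Q1 v, Q2 v))"
      unfolding subset_diffeo_def prod_diffeo_def composable_def
      using V(4,5) arrs composable by (simp add: o_def image_subset_iff)
    with dsmooth_comp have "darr G n V ((\<lambda>(g, h). comp G g h) \<circ> (\<lambda>v. (Q1 v, Q2 v)))"
      by (rule dsmoothD)
    then have "darr G n V (\<lambda>v. comp G (Q1 v) (Q2 v))" by (simp add: o_def)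
    then have "darr ?A n V (abel_map G \<circ> (\<lambda>v. comp G (Q1 v) (Q2 v)))" by (rule plot_abel_map)
    then have "darr ?A n V (?m \<circ> P)"
    proof (rule plot_cong[OF diffeology_abel_quot_arr])
      fix v assume "v \<in> V"
      then show "(abel_map G \<circ> (\<lambda>v. comp G (Q1 v) (Q2 v))) v = (?m \<circ> P) v"
        using Q arrs composable by (simp add: case_prod_beta)
    qed
    then show "\<exists>V. u \<in> V \<and> V \<subseteq> U \<and> open_euc n V \<and> darr ?A n V (?m \<circ> P)"
      using V(1-3) by (intro exI[of _ V] conjI)
  qed
  then show ?thesis unfolding smooth_between_def dsmooth_def using comp_arr by auto
qed

lemma diffeological_groupoid_abel_quot: "diffeological_groupoid (abel_quot G)"
  unfolding diffeological_groupoid_def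
  using groupoid_abel_quot diffeology_abel_quot_arr diffeology_obj
    smooth_between_src_abel_quot smooth_between_tgt_abel_quot smooth_between_ide_abel_quot
    smooth_between_inv_abel_quot smooth_between_comp_abel_quot
  by simp

lemma smooth_morphism_abel_map: "smooth_morphism G (abel_quot G) (abel_map G) id"
  unfolding smooth_morphism_def smooth_between_def composable_def
  using dsmooth_abel_map by (auto simp: dsmooth_def)

end

section \<open>The universal property\<close>

context diffeo_gpd
begin

lemma comm_rel_restrict_gpd:
  assumes r: "(g, g') \<in> comm_rel G" and g: "g \<in> arr (restrict_gpd G U)"
  shows "(g, g') \<in> comm_rel (restrict_gpd G U)"
proof -
  note r = comm_relD[OF r]
  have "comp G g' (inv G g) \<in> commutator_subgroup (restrict_gpd G U) (tgt G g)"
    using r g by (auto intro: commutator_subgroup_restrict_gpd)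
  then show ?thesis using r g unfolding comm_rel_def comm_subgroupoid_def by auto
qed

lemma arr_restrict_abel_quot:
  "arr (restrict_gpd (abel_quot G) U) = abel_map G ` arr (restrict_gpd G U)"
  by (auto simp: quotient_eq_image_abel_map)

context
  fixes H :: "('h, 'k) dgpd" and U Psi psi
  assumes H: "diffeological_groupoid H" "abelian H" and U: "U \<subseteq> obj G"
    and Psi: "smooth_morphism (restrict_gpd G U) H Psi psi"
begin

interpretation Psi: gpd_hom "restrict_gpd G U" H Psi psi
  using groupoid_restrict_gpd[OF groupoid U] H(1) Psi
  by (intro gpd_hom_if_smooth_morphism) (simp_all add: diffeological_groupoid_def)

lemma Psi_rep_abel_map: "g \<in> arr (restrict_gpd G U) \<Longrightarrow> Psi (rep (abel_map G g)) = Psi g"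
  using Psi.comm_rel_map[OF H(2) comm_rel_restrict_gpd[OF comm_rel_rep]] by simp

lemma dsmooth_Psi_rep:
  "dsmooth (darr (restrict_gpd (abel_quot G) U)) (darr H) (Psi \<circ> rep)"
proof -
  let ?S = "{c \<in> arr G // comm_rel G. src (abel_quot G) c \<in> U \<and> tgt (abel_quot G) c \<in> U}"
  have DH: "diffeology (arr H) (darr H)" using H(1) unfolding diffeological_groupoid_def by blast
  have "dsmooth (subset_diffeo (quot_diffeo (darr G) (arr G // comm_rel G) (abel_map G)) ?S) (darr H)
    (Psi \<circ> rep)"
  proof (rule dsmooth_subset_quot_diffeo[OF diffeology_arr DH quotient_eq_image_abel_map[THEN equalityD1]])
    show "(Psi \<circ> rep) ` ?S \<subseteq> arr H" by (auto elim!: quotientE_abel_map)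
    fix n V Q assume Q: "darr G n V Q" and QS: "(abel_map G \<circ> Q) ` V \<subseteq> ?S"
    have QU: "Q v \<in> arr (restrict_gpd G U)" if "v \<in> V" for v
      using plot_image[OF diffeology_arr Q that] QS that by auto
    have "dsmooth (darr (restrict_gpd G U)) (darr H) Psi"
      using Psi by (simp add: smooth_morphism_def smooth_between_def)
    moreover have "darr (restrict_gpd G U) n V Q"
      using Q QU by (simp add: subset_diffeo_def image_subset_iff)
    ultimately have "darr H n V (Psi \<circ> Q)" by (rule dsmoothD)
    then show "darr H n V (Psi \<circ> rep \<circ> abel_map G \<circ> Q)"
      by (rule plot_cong[OF DH]) (simp add: Psi_rep_abel_map[OF QU])
  qed
  then show ?thesis by simp
qed

lemma smooth_morphism_Psi_rep: "smooth_morphism (restrict_gpd (abel_quot G) U) H (Psi \<circ> rep) psi"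
  unfolding smooth_morphism_def
proof (intro conjI)
  show "smooth_between (arr (restrict_gpd (abel_quot G) U)) (darr (restrict_gpd (abel_quot G) U))
     (arr H) (darr H) (Psi \<circ> rep)"
    unfolding smooth_between_def arr_restrict_abel_quot
    using dsmooth_Psi_rep by (auto simp: Psi_rep_abel_map)
  show "smooth_between (obj (restrict_gpd (abel_quot G) U)) (dobj (restrict_gpd (abel_quot G) U))
     (obj H) (dobj H) psi"
    using Psi by (simp add: smooth_morphism_def)
  show "\<forall>c\<in>arr (restrict_gpd (abel_quot G) U).
     src H ((Psi \<circ> rep) c) = psi (src (restrict_gpd (abel_quot G) U) c) \<and>
     tgt H ((Psi \<circ> rep) c) = psi (tgt (restrict_gpd (abel_quot G) U) c)"
    unfolding arr_restrict_abel_quot by (auto simp: Psi_rep_abel_map)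
  show "\<forall>(c, d)\<in>composable (restrict_gpd (abel_quot G) U).
     (Psi \<circ> rep) (comp (restrict_gpd (abel_quot G) U) c d) =
     comp H ((Psi \<circ> rep) c) ((Psi \<circ> rep) d)"
    unfolding composable_def arr_restrict_abel_quot
    by (auto simp: Psi_rep_abel_map Psi.comp_map[simplified])
qed

end

lemma abel_quot_universal:
  fixes H :: "('h, 'k) dgpd"
  assumes U: "D_open (obj G) (dobj G) U" and H: "diffeological_groupoid H" "abelian H"
    and Psi: "smooth_morphism (restrict_gpd G U) H Psi psi"
  shows "\<exists>Psi' psi'. smooth_morphism (restrict_gpd (abel_quot G) U) H Psi' psi' \<and>
           (\<forall>g\<in>arr (restrict_gpd G U). Psi' (abel_map G g) = Psi g) \<and>
           (\<forall>x\<in>U. psi' x = psi x) \<and>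
           (\<forall>Psi'' psi''. smooth_morphism (restrict_gpd (abel_quot G) U) H Psi'' psi'' \<and>
              (\<forall>g\<in>arr (restrict_gpd G U). Psi'' (abel_map G g) = Psi g) \<and>
              (\<forall>x\<in>U. psi'' x = psi x) \<longrightarrow>
              (\<forall>c\<in>arr (restrict_gpd (abel_quot G) U). Psi'' c = Psi' c) \<and> (\<forall>x\<in>U. psi'' x = psi' x))"
proof (intro exI conjI allI impI)
  have "U \<subseteq> obj G" using U by (simp add: D_open_def)
  note factor = smooth_morphism_Psi_rep[OF H this Psi] Psi_rep_abel_map[OF H this Psi]
  show "smooth_morphism (restrict_gpd (abel_quot G) U) H (Psi \<circ> rep) psi" by (fact factor(1))
  show "\<forall>g\<in>arr (restrict_gpd G U). (Psi \<circ> rep) (abel_map G g) = Psi g" using factor(2) by simp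
  show "\<forall>x\<in>U. psi x = psi x" by simp
  fix Psi'' psi''
  assume "smooth_morphism (restrict_gpd (abel_quot G) U) H Psi'' psi'' \<and>
    (\<forall>g\<in>arr (restrict_gpd G U). Psi'' (abel_map G g) = Psi g) \<and> (\<forall>x\<in>U. psi'' x = psi x)"
  then show "\<forall>c\<in>arr (restrict_gpd (abel_quot G) U). Psi'' c = (Psi \<circ> rep) c"
    and "\<forall>x\<in>U. psi'' x = psi x"
    unfolding arr_restrict_abel_quot using factor(2) by auto
qed

end

theorem mainTheorem14:
  fixes G :: "('g, 'm) dgpd"
  assumes "diffeological_groupoid G"
  shows "diffeological_groupoid (abel_quot G) \<and>
         is_abelianization G (abel_quot G) (abel_map G) TYPE('h) TYPE('k)"
proof -
  interpret diffeo_gpd G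
    using assms by unfold_locales (simp_all add: diffeological_groupoid_def)
  show ?thesis
    unfolding is_abelianization_def
    by (intro conjI allI impI; (elim conjE)?; (rule abel_quot_universal; assumption)?)
      (simp_all add: diffeological_groupoid_abel_quot abelian_abel_quot smooth_morphism_abel_map
        quotient_eq_image_abel_map)
qed

end
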